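(* Consider the linear model $Y=X\beta^0+\epsilon$ with $Y\in\mathbb{R}^n$, $X\in\mathbb{R}^{n\times p}$, $\beta^0\in\mathbb{R}^p$, and noise vector $\epsilon\in\mathbb{R}^n$ with i.i.d. entries of mean $0$ and variance $\sigma^2$. Let $\Omega$ be a norm on $\mathbb{R}^p$ with dual norm $\Omega^*$, let $\lambda>0$, let $\hat\beta$ be a minimizer of $\beta\mapsto\|Y-X\beta\|_n+\lambda\Omega(\beta)$ and $\hat\epsilon:=Y-X\hat\beta$. Define $$f:=\frac{\lambda\Omega(\beta^0)}{\|\epsilon\|_n},\qquad \lambda^0:=\frac{\Omega^*(\epsilon^TX)}{n\|\epsilon\|_n}.$$ Suppose that (Assumption I) both $$P\Big(Y\in\big\{\tilde Y:\ \min_{\beta:\,X\beta=\tilde Y}\Omega(\beta)\le\|\epsilon\|_n\big\}\Big)=0\quad\text{and}\quad \frac{\lambda^0}{\lambda}(1+2f)<1$$ hold. Then $$1+f\ \ge\ \frac{\|\hat\epsilon\|_n}{\|\epsilon\|_n}\ \ge\ \frac{1-\frac{\lambda^0}{\lambda}(1+2f)}{f+2}\ >0.$$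
   Context: For $a\in\mathbb{R}^n$, $\|a\|_n:=\big(\sum_{j=1}^n a_j^2/n\big)^{1/2}$. The dual norm is $\Omega^*(x):=\max_{z:\,\Omega(z)\le 1} z^Tx$ for $x\in\mathbb{R}^p$; $\epsilon^TX$ is regarded as a vector in $\mathbb{R}^p$. *)

theory Defs
  imports "HOL-Probability.Probability"
begin

definition norm_n :: "real ^ 'n \<Rightarrow> real" where
  "norm_n a = sqrt ((\<Sum>j\<in>UNIV. (a $ j)^2) / real CARD('n))"

definition is_norm :: "(real ^ 'p \<Rightarrow> real) \<Rightarrow> bool" where
  "is_norm \<Omega> \<longleftrightarrow>
     (\<forall>x. \<Omega> x = 0 \<longrightarrow> x = 0) \<and>
     (\<forall>c x. \<Omega> (c *\<^sub>R x) = \<bar>c\<bar> * \<Omega> x) \<and>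
     (\<forall>x y. \<Omega> (x + y) \<le> \<Omega> x + \<Omega> y)"

text \<open>Dual norm  Omega*(x) = max_{Omega(z) <= 1} z^T x (the max is attained, so Sup = max).\<close>
definition dual_norm :: "(real ^ 'p \<Rightarrow> real) \<Rightarrow> real ^ 'p \<Rightarrow> real" where
  "dual_norm \<Omega> x = Sup {z \<bullet> x | z. \<Omega> z \<le> 1}"

end

theory Submission
  imports Defs
begin

text \<open>The bounds hold for every outcome. With \<open>\<delta> = \<beta>hat - \<beta>\<^sup>0\<close> and \<open>\<epsilon>hat = \<epsilon> - X\<delta>\<close>, comparing the objective at
  \<open>\<beta>hat\<close> and \<open>\<beta>\<^sup>0\<close> gives \<open>\<parallel>\<epsilon>hat\<parallel>\<^sub>n + \<lambda>\<Omega>(\<beta>hat) \<le> \<parallel>\<epsilon>\<parallel>\<^sub>n + \<lambda>\<Omega>(\<beta>\<^sup>0)\<close>, which is the upper bound.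
  For the lower bound, Cauchy-Schwarz and \<open>\<epsilon>\<^sup>TX\<delta> \<le> \<Omega>(\<delta>)\<Omega>\<^sup>*(\<epsilon>\<^sup>TX)\<close> give
  \<open>\<parallel>\<epsilon>\<parallel>\<^sub>n\<parallel>\<epsilon>hat\<parallel>\<^sub>n \<ge> \<epsilon>\<^sup>T\<epsilon>hat/n \<ge> \<parallel>\<epsilon>\<parallel>\<^sub>n\<^sup>2 - \<lambda>\<^sup>0\<parallel>\<epsilon>\<parallel>\<^sub>n\<Omega>(\<delta>)\<close>, so
  \<open>\<parallel>\<epsilon>hat\<parallel>\<^sub>n \<ge> \<parallel>\<epsilon>\<parallel>\<^sub>n - \<lambda>\<^sup>0(\<Omega>(\<beta>hat) + \<Omega>(\<beta>\<^sup>0))\<close>. Eliminating \<open>\<Omega>(\<beta>hat)\<close> between the two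
  inequalities leaves a linear inequality for the ratio \<open>\<parallel>\<epsilon>hat\<parallel>\<^sub>n / \<parallel>\<epsilon>\<parallel>\<^sub>n\<close>.\<close>

lemma is_norm_scaleR: "is_norm \<Omega> \<Longrightarrow> \<Omega> (c *\<^sub>R x) = \<bar>c\<bar> * \<Omega> x"
  by (simp add: is_norm_def)

lemma is_norm_triangle: "is_norm \<Omega> \<Longrightarrow> \<Omega> (x + y) \<le> \<Omega> x + \<Omega> y"
  by (simp add: is_norm_def)

lemma is_norm_zero: "is_norm \<Omega> \<Longrightarrow> \<Omega> 0 = 0"
  using is_norm_scaleR[of \<Omega> 0 0] by simp

lemma is_norm_eq_0_iff: "is_norm \<Omega> \<Longrightarrow> \<Omega> x = 0 \<longleftrightarrow> x = 0"
  using is_norm_zero[of \<Omega>] by (auto simp: is_norm_def)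

lemma is_norm_minus: "is_norm \<Omega> \<Longrightarrow> \<Omega> (- x) = \<Omega> x"
  using is_norm_scaleR[of \<Omega> "-1" x] by simp

lemma is_norm_nonneg: "is_norm \<Omega> \<Longrightarrow> 0 \<le> \<Omega> x"
  using is_norm_triangle[of \<Omega> x "-x"] is_norm_minus[of \<Omega> x] is_norm_zero[of \<Omega>] by simp

lemma is_norm_diff_le: "is_norm \<Omega> \<Longrightarrow> \<Omega> (x - y) \<le> \<Omega> x + \<Omega> y"
  using is_norm_triangle[of \<Omega> x "-y"] is_norm_minus[of \<Omega> y] by simp

lemma is_norm_sum_le: "is_norm \<Omega> \<Longrightarrow> \<Omega> (sum f S) \<le> (\<Sum>i\<in>S. \<Omega> (f i))"
  by (induction S rule: infinite_finite_induct)
    (auto simp: is_norm_zero intro: order_trans[OF is_norm_triangle])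

lemma is_norm_le_norm:
  fixes \<Omega> :: "real ^ 'p \<Rightarrow> real"
  assumes "is_norm \<Omega>"
  shows "\<Omega> x \<le> (\<Sum>i\<in>UNIV. \<Omega> (axis i 1)) * norm x"
proof -
  have "\<Omega> x = \<Omega> (\<Sum>i\<in>UNIV. (x $ i) *\<^sub>R axis i 1)"
    using basis_expansion[of x] by (simp add: scalar_mult_eq_scaleR)
  also have "\<dots> \<le> (\<Sum>i\<in>UNIV. \<bar>x $ i\<bar> * \<Omega> (axis i 1))"
    using is_norm_sum_le[OF assms, of "\<lambda>i. (x $ i) *\<^sub>R axis i 1" UNIV]
    by (simp add: is_norm_scaleR[OF assms])
  also have "\<dots> \<le> (\<Sum>i\<in>UNIV. norm x * \<Omega> (axis i 1))"
    by (intro sum_mono mult_right_mono component_le_norm_cart is_norm_nonneg[OF assms])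
  finally show ?thesis
    by (simp add: sum_distrib_left mult.commute)
qed

lemma is_norm_lipschitz:
  fixes \<Omega> :: "real ^ 'p \<Rightarrow> real"
  assumes "is_norm \<Omega>"
  shows "(\<Sum>i\<in>UNIV. \<Omega> (axis i 1))-lipschitz_on S \<Omega>"
proof (rule lipschitz_onI)
  fix x y
  have "\<Omega> x \<le> \<Omega> (x - y) + \<Omega> y" "\<Omega> y \<le> \<Omega> (x - y) + \<Omega> x"
    using is_norm_triangle[OF assms, of "x - y" y] is_norm_triangle[OF assms, of "y - x" x]
      is_norm_minus[OF assms, of "x - y"] by simp_all
  then show "dist (\<Omega> x) (\<Omega> y) \<le> (\<Sum>i\<in>UNIV. \<Omega> (axis i 1)) * dist x y"
    using is_norm_le_norm[OF assms, of "x - y"] by (simp add: dist_norm abs_le_iff)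
qed (simp add: sum_nonneg is_norm_nonneg[OF assms])

lemma is_norm_ge_norm:
  fixes \<Omega> :: "real ^ 'p \<Rightarrow> real"
  assumes "is_norm \<Omega>"
  obtains m where "m > 0" "\<And>x. m * norm x \<le> \<Omega> x"
proof -
  have "axis (undefined :: 'p) (1 :: real) \<in> sphere 0 1"
    by simp
  then have "sphere (0 :: real ^ 'p) 1 \<noteq> {}"
    by blast
  then obtain z where "z \<in> sphere 0 1" and "\<forall>y\<in>sphere 0 1. \<Omega> z \<le> \<Omega> y"
    using continuous_attains_inf[OF compact_sphere _ lipschitz_on_continuous_on[OF is_norm_lipschitz[OF assms]]]
    by blast
  then have z: "norm z = 1" and z_min: "\<And>y. norm y = 1 \<Longrightarrow> \<Omega> z \<le> \<Omega> y"
    by simp_all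
  have "\<Omega> z * norm x \<le> \<Omega> x" for x
  proof (cases "x = 0")
    case False
    then have "\<Omega> z \<le> \<Omega> ((1 / norm x) *\<^sub>R x)"
      by (intro z_min) simp
    with False show ?thesis
      by (simp add: is_norm_scaleR[OF assms] field_simps)
  qed (simp add: is_norm_zero[OF assms])
  moreover have "\<Omega> z > 0"
    using z is_norm_nonneg[OF assms, of z] is_norm_eq_0_iff[OF assms, of z] by fastforce
  ultimately show ?thesis
    using that by blast
qed

lemma bdd_above_dual_norm_set:
  fixes \<Omega> :: "real ^ 'p \<Rightarrow> real"
  assumes "is_norm \<Omega>"
  shows "bdd_above {z \<bullet> x | z. \<Omega> z \<le> 1}"
proof -
  obtain m where m: "m > 0" "\<And>z. m * norm z \<le> \<Omega> z"
    using is_norm_ge_norm[OF assms] by blast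
  have "z \<bullet> x \<le> norm x / m" if "\<Omega> z \<le> 1" for z
  proof -
    have "norm z \<le> 1 / m"
      using m(2)[of z] that m(1) by (simp add: field_simps)
    then have "norm z * norm x \<le> norm x / m"
      using mult_right_mono[OF _ norm_ge_zero] by fastforce
    then show ?thesis
      using Cauchy_Schwarz_ineq2[of z x] by linarith
  qed
  then show ?thesis
    by (intro bdd_aboveI[where M = "norm x / m"]) blast
qed

lemma dual_norm_nonneg:
  assumes "is_norm \<Omega>"
  shows "0 \<le> dual_norm \<Omega> x"
proof -
  have "0 \<bullet> x \<in> {z \<bullet> x | z. \<Omega> z \<le> 1}"
    using is_norm_zero[OF assms] by fastforce
  then show ?thesis
    unfolding dual_norm_def by (rule cSup_upper2) (simp_all add: bdd_above_dual_norm_set[OF assms])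
qed

lemma inner_le_dual_norm:
  assumes "is_norm \<Omega>"
  shows "z \<bullet> x \<le> \<Omega> z * dual_norm \<Omega> x"
proof (cases "z = 0")
  case False
  then have pos: "\<Omega> z > 0"
    using is_norm_nonneg[OF assms, of z] is_norm_eq_0_iff[OF assms, of z] by linarith
  then have "((1 / \<Omega> z) *\<^sub>R z) \<bullet> x \<le> dual_norm \<Omega> x"
    unfolding dual_norm_def
    by (intro cSup_upper bdd_above_dual_norm_set[OF assms])
      (auto simp: is_norm_scaleR[OF assms] intro!: exI[of _ "(1 / \<Omega> z) *\<^sub>R z"])
  with pos show ?thesis
    by (simp add: divide_le_eq mult.commute)
qed (simp add: is_norm_zero[OF assms])

lemma norm_n_eq: "norm_n (a :: real ^ 'n) = norm a / sqrt (real CARD('n))"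
  unfolding norm_n_def norm_eq_sqrt_inner inner_vec_def
  by (simp add: power2_eq_square real_sqrt_divide)

lemma norm_n_residual_ge:
  fixes X :: "real ^ 'p ^ 'n" and e :: "real ^ 'n"
  assumes "is_norm \<Omega>" and "norm_n e > 0"
  shows "norm_n e - \<Omega> d * (dual_norm \<Omega> (e v* X) / (real CARD('n) * norm_n e))
           \<le> norm_n (e - X *v d)"
proof -
  define s where "s = sqrt (real CARD('n))"
  have s: "s > 0" "real CARD('n) = s * s"
    unfolding s_def by simp_all
  have e: "norm e > 0"
    using assms(2) s by (simp add: norm_n_eq s_def[symmetric] zero_less_divide_iff)
  have "e \<bullet> (X *v d) \<le> \<Omega> d * dual_norm \<Omega> (e v* X)"
    using inner_le_dual_norm[OF assms(1), of d "e v* X"] by (metis dot_lmul_matrix inner_commute)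
  then have "norm e * norm e - \<Omega> d * dual_norm \<Omega> (e v* X) \<le> e \<bullet> (e - X *v d)"
    by (simp add: inner_diff_right power2_norm_eq_inner[symmetric] power2_eq_square)
  also have "\<dots> \<le> norm e * norm (e - X *v d)"
    by (rule norm_cauchy_schwarz)
  finally have "norm e - \<Omega> d * dual_norm \<Omega> (e v* X) / norm e \<le> norm (e - X *v d)"
    using e by (simp add: field_simps)
  then have "(norm e - \<Omega> d * dual_norm \<Omega> (e v* X) / norm e) / s \<le> norm (e - X *v d) / s"
    using s by (simp add: divide_right_mono)
  moreover have "(norm e - \<Omega> d * dual_norm \<Omega> (e v* X) / norm e) / s
      = norm e / s - \<Omega> d * (dual_norm \<Omega> (e v* X) / (real CARD('n) * (norm e / s)))"
    using s e by (simp add: field_simps)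
  ultimately show ?thesis
    by (simp add: norm_n_eq s_def[symmetric])
qed

lemma residual_ratio_bounds:
  fixes E R H B lam lam0 f :: real
  defines "f \<equiv> lam * B / E"
  assumes "E > 0" "R \<ge> 0" "H \<ge> 0" "B \<ge> 0" "lam > 0" "lam0 \<ge> 0"
    and basic: "R + lam * H \<le> E + lam * B"
    and lower: "E - lam0 * (H + B) \<le> R"
    and small: "lam0 / lam * (1 + 2 * f) < 1"
  shows "R / E \<le> 1 + f"
    and "(1 - lam0 / lam * (1 + 2 * f)) / (f + 2) \<le> R / E"
    and "0 < (1 - lam0 / lam * (1 + 2 * f)) / (f + 2)"
proof -
  define \<alpha> where "\<alpha> = lam0 / lam"
  have f: "f \<ge> 0" "lam * B = f * E" and \<alpha>: "\<alpha> \<ge> 0" "lam0 = \<alpha> * lam"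
    using assms(2-7) by (simp_all add: f_def \<alpha>_def)
  have "R \<le> E + lam * B"
    using basic mult_nonneg_nonneg[of lam H] assms(4,6) by linarith
  then show "R / E \<le> 1 + f"
    using assms(2) f(2) by (simp add: divide_le_eq distrib_right)
  have "\<alpha> * (lam * H) \<le> \<alpha> * (E + f * E - R)"
    using basic \<alpha>(1) unfolding f(2) by (intro mult_left_mono) simp_all
  moreover have "E - \<alpha> * (lam * H) - \<alpha> * (f * E) \<le> R"
    using lower unfolding \<alpha>(2) f(2)[symmetric] by (simp add: algebra_simps)
  ultimately have "E * (1 - \<alpha> * (1 + 2 * f)) \<le> R - \<alpha> * R"
    by (simp add: algebra_simps)
  also have "\<dots> \<le> R"
    using \<alpha>(1) assms(3) by simp
  finally have "1 - \<alpha> * (1 + 2 * f) \<le> R / E"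
    using assms(2) by (simp add: le_divide_eq mult.commute)
  moreover have pos: "0 < 1 - \<alpha> * (1 + 2 * f)"
    using small by (simp add: \<alpha>_def)
  moreover have "(1 - \<alpha> * (1 + 2 * f)) / (f + 2) \<le> 1 - \<alpha> * (1 + 2 * f)"
    using pos f(1) by (simp add: divide_le_eq)
  ultimately show "(1 - lam0 / lam * (1 + 2 * f)) / (f + 2) \<le> R / E"
    and "0 < (1 - lam0 / lam * (1 + 2 * f)) / (f + 2)"
    using f(1) unfolding \<alpha>_def by simp_all
qed

lemma sqrt_lasso_residual_bounds:
  fixes X :: "real ^ 'p ^ 'n" and e y :: "real ^ 'n" and b0 bh :: "real ^ 'p"
    and \<Omega> :: "real ^ 'p \<Rightarrow> real" and lam :: real
  defines "f \<equiv> lam * \<Omega> b0 / norm_n e"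
    and "lam0 \<equiv> dual_norm \<Omega> (e v* X) / (real CARD('n) * norm_n e)"
  assumes norm: "is_norm \<Omega>" and "lam > 0" and e: "norm_n e > 0"
    and model: "y = X *v b0 + e"
    and minimizer: "norm_n (y - X *v bh) + lam * \<Omega> bh \<le> norm_n (y - X *v b0) + lam * \<Omega> b0"
    and small: "lam0 / lam * (1 + 2 * f) < 1"
  shows "norm_n (y - X *v bh) / norm_n e \<le> 1 + f
    \<and> (1 - lam0 / lam * (1 + 2 * f)) / (f + 2) \<le> norm_n (y - X *v bh) / norm_n e
    \<and> 0 < (1 - lam0 / lam * (1 + 2 * f)) / (f + 2)"
proof -
  have residual: "y - X *v bh = e - X *v (bh - b0)"
    by (simp add: model matrix_vector_mult_diff_distrib)
  have lam0: "0 \<le> lam0"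
    using dual_norm_nonneg[OF norm] e by (simp add: lam0_def)
  have "norm_n e - lam0 * (\<Omega> bh + \<Omega> b0) \<le> norm_n e - \<Omega> (bh - b0) * lam0"
    using mult_left_mono[OF is_norm_diff_le[OF norm, of bh b0] lam0] by (simp add: mult.commute)
  also have "\<dots> \<le> norm_n (y - X *v bh)"
    unfolding residual lam0_def by (rule norm_n_residual_ge[OF norm e])
  finally have lower: "norm_n e - lam0 * (\<Omega> bh + \<Omega> b0) \<le> norm_n (y - X *v bh)" .
  have "norm_n (y - X *v bh) + lam * \<Omega> bh \<le> norm_n e + lam * \<Omega> b0"
    using minimizer by (simp add: model)
  moreover have "0 \<le> norm_n (y - X *v bh)"
    by (simp add: norm_n_eq)
  ultimately show ?thesis
    using residual_ratio_bounds[OF e _ is_norm_nonneg[OF norm] is_norm_nonneg[OF norm] \<open>lam > 0\<close>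
        lam0 _ lower small[unfolded f_def]]
    unfolding f_def by blast
qed

theorem lemma4:
  fixes M :: "'a measure"
    and X :: "real ^ 'p ^ 'n"
    and beta0 :: "real ^ 'p"
    and \<epsilon> :: "'a \<Rightarrow> real ^ 'n"
    and Y :: "'a \<Rightarrow> real ^ 'n"
    and \<Omega> :: "real ^ 'p \<Rightarrow> real"
    and lam \<sigma> :: real
    and betahat :: "'a \<Rightarrow> real ^ 'p"
  assumes prob: "prob_space M"
    and eps_rv: "\<And>i. (\<lambda>\<omega>. \<epsilon> \<omega> $ i) \<in> borel_measurable M"
    and eps_indep: "prob_space.indep_vars M (\<lambda>i. borel) (\<lambda>i \<omega>. \<epsilon> \<omega> $ i) UNIV"
    and eps_ident: "\<And>i j. distr M borel (\<lambda>\<omega>. \<epsilon> \<omega> $ i) = distr M borel (\<lambda>\<omega>. \<epsilon> \<omega> $ j)"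
    and eps_integrable: "\<And>i. integrable M (\<lambda>\<omega>. (\<epsilon> \<omega> $ i)^2)"
    and eps_mean: "\<And>i. prob_space.expectation M (\<lambda>\<omega>. \<epsilon> \<omega> $ i) = 0"
    and eps_var: "\<And>i. prob_space.variance M (\<lambda>\<omega>. \<epsilon> \<omega> $ i) = \<sigma>^2"
    and model: "\<And>\<omega>. Y \<omega> = X *v beta0 + \<epsilon> \<omega>"
    and norm: "is_norm \<Omega>"
    and lampos: "lam > 0"
    and minimizer: "\<And>\<omega> \<beta>. norm_n (Y \<omega> - X *v betahat \<omega>) + lam * \<Omega> (betahat \<omega>)
                         \<le> norm_n (Y \<omega> - X *v \<beta>) + lam * \<Omega> \<beta>"
    and assumptionI: "AE \<omega> in M. \<not> (\<exists>\<beta>. X *v \<beta> = Y \<omega> \<and> \<Omega> \<beta> \<le> norm_n (\<epsilon> \<omega>))"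
  shows "AE \<omega> in M.
     (let f = lam * \<Omega> beta0 / norm_n (\<epsilon> \<omega>);
          lam0 = dual_norm \<Omega> (\<epsilon> \<omega> v* X) / (real CARD('n) * norm_n (\<epsilon> \<omega>));
          epshat = Y \<omega> - X *v betahat \<omega>
      in (norm_n (\<epsilon> \<omega>) > 0 \<and> lam0 / lam * (1 + 2 * f) < 1) \<longrightarrow>
         1 + f \<ge> norm_n epshat / norm_n (\<epsilon> \<omega>) \<and>
         norm_n epshat / norm_n (\<epsilon> \<omega>) \<ge> (1 - lam0 / lam * (1 + 2 * f)) / (f + 2) \<and>
         (1 - lam0 / lam * (1 + 2 * f)) / (f + 2) > 0)"
  unfolding Let_def
  using sqrt_lasso_residual_bounds[OF norm lampos _ model minimizer]
  by (intro AE_I2 impI) blast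

end
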